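(* Let $X$ be a finite connected simplicial complex, $\delta$ a cellular perversity, $\mathcal T(X,\delta)$ the topology with base $\mathcal B(X,\delta)=\{U(\Delta,\delta)\}$, and $\operatorname{Pre}\mathcal B(X,\delta)$ the category of presheaves on $\mathcal B(X,\delta)$ ordered by inclusion. Let $\Phi^+:\operatorname{Pre}\mathcal B(X,\delta)\to\mathcal{SH}(\mathcal T(X,\delta))$ be $\mathbf S\mapsto\tilde{\mathbf S}$ (with $\tilde S(W)=\varprojlim_{U(\Delta,\delta)\subseteq W}S(U(\Delta,\delta))$), and $\Phi^-:\mathcal{SH}(\mathcal T(X,\delta))\to\operatorname{Pre}\mathcal B(X,\delta)$ the restriction of a sheaf to the open sets $U(\Delta,\delta)$. Then $\Phi^+$ and $\Phi^-$ are quasi-inverse equivalences of categories.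
   Context: Simplices are open; $\Delta\leftrightarrow\Delta'$ means one is a face of the other. Cellular perversity: $\delta:\mathbb Z_{\ge0}\to\mathbb Z$, $\delta(0)=0$, bijective from each $\{0,\dots,k\}$ onto an interval $\{a,\dots,a+k\}$, $a\le0$; $\delta(\Delta)=\delta(\dim\Delta)$. Order: $\Delta\ge\Delta'$ iff there is a chain $\Delta=\Delta_0,\dots,\Delta_r=\Delta'$ ($r\ge0$) with $\Delta_i\leftrightarrow\Delta_{i+1}$, $\delta(\Delta_i)=\delta(\Delta_{i+1})+1$. Perverse star $U(\Delta,\delta)=\bigsqcup_{\Delta'\le\Delta}\Delta'$. $\mathcal{SH}(\mathcal T(X,\delta))$: sheaves of $\mathbb F$-vector spaces on $(X,\mathcal T(X,\delta))$. *)

theory Defs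
  imports "HOL-Analysis.Analysis" "HOL-Algebra.Module"
begin

definition simplicial_complex :: "'v set set \<Rightarrow> bool" where
  "simplicial_complex C \<longleftrightarrow> finite C \<and> (\<forall>S\<in>C. finite S \<and> S \<noteq> {}) \<and>
     (\<forall>S\<in>C. \<forall>R. R \<subseteq> S \<and> R \<noteq> {} \<longrightarrow> R \<in> C)"

definition open_simplex :: "'v set \<Rightarrow> ('v \<Rightarrow> real) set" where
  "open_simplex S = {f. (\<forall>v\<in>S. 0 < f v) \<and> (\<forall>v. v \<notin> S \<longrightarrow> f v = 0) \<and> sum f S = 1}"

definition realization :: "'v set set \<Rightarrow> ('v \<Rightarrow> real) set" where
  "realization C = (\<Union>S\<in>C. open_simplex S)"

definition sdim :: "'v set \<Rightarrow> nat" where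
  "sdim S = card S - 1"

definition cellular_perversity :: "(nat \<Rightarrow> int) \<Rightarrow> bool" where
  "cellular_perversity d \<longleftrightarrow> d 0 = 0 \<and>
     (\<forall>k. \<exists>a \<le> 0. bij_betw d {0..k} {a..a + int k})"

definition perv_step :: "'v set set \<Rightarrow> (nat \<Rightarrow> int) \<Rightarrow> 'v set \<Rightarrow> 'v set \<Rightarrow> bool" where
  "perv_step C d S S' \<longleftrightarrow> S \<in> C \<and> S' \<in> C \<and> (S \<subseteq> S' \<or> S' \<subseteq> S) \<and>
     d (sdim S) = d (sdim S') + 1"

definition perv_ge :: "'v set set \<Rightarrow> (nat \<Rightarrow> int) \<Rightarrow> 'v set \<Rightarrow> 'v set \<Rightarrow> bool" where
  "perv_ge C d S S' \<longleftrightarrow> (perv_step C d)\<^sup>*\<^sup>* S S'"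

definition perv_star :: "'v set set \<Rightarrow> (nat \<Rightarrow> int) \<Rightarrow> 'v set \<Rightarrow> ('v \<Rightarrow> real) set" where
  "perv_star C d S = \<Union>{open_simplex S' | S'. S' \<in> C \<and> perv_ge C d S S'}"

definition perv_base :: "'v set set \<Rightarrow> (nat \<Rightarrow> int) \<Rightarrow> ('v \<Rightarrow> real) set set" where
  "perv_base C d = perv_star C d ` C"

definition perv_topology :: "'v set set \<Rightarrow> (nat \<Rightarrow> int) \<Rightarrow> ('v \<Rightarrow> real) topology" where
  "perv_topology C d = topology (\<lambda>W. \<exists>F \<subseteq> perv_base C d. W = \<Union>F)"

text \<open>Vector spaces over a field Fld are HOL-Algebra modules over Fld.\<close>
definition linear_map :: "'k ring \<Rightarrow> ('k,'a) module \<Rightarrow> ('k,'b) module \<Rightarrow> ('a \<Rightarrow> 'b) \<Rightarrow> bool" where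
  "linear_map Fld V W f \<longleftrightarrow> f \<in> carrier V \<rightarrow> carrier W \<and>
     (\<forall>x\<in>carrier V. \<forall>y\<in>carrier V. f (add V x y) = add W (f x) (f y)) \<and>
     (\<forall>a\<in>carrier Fld. \<forall>x\<in>carrier V. f (smult V a x) = smult W a (f x))"

text \<open>A presheaf on a family Os of sets (ordered by inclusion): objects and restriction maps.\<close>
type_synonym ('k,'a,'x) presheaf = "('x set \<Rightarrow> ('k,'a) module) \<times> ('x set \<Rightarrow> 'x set \<Rightarrow> 'a \<Rightarrow> 'a)"

definition presheaf_on :: "'k ring \<Rightarrow> 'x set set \<Rightarrow> ('k,'a,'x) presheaf \<Rightarrow> bool" where
  "presheaf_on Fld Os P \<longleftrightarrow>
     (\<forall>U\<in>Os. module Fld (fst P U)) \<and>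
     (\<forall>U\<in>Os. \<forall>U'\<in>Os. U' \<subseteq> U \<longrightarrow> linear_map Fld (fst P U) (fst P U') (snd P U U')) \<and>
     (\<forall>U\<in>Os. \<forall>x\<in>carrier (fst P U). snd P U U x = x) \<and>
     (\<forall>U\<in>Os. \<forall>U'\<in>Os. \<forall>U''\<in>Os. U'' \<subseteq> U' \<and> U' \<subseteq> U \<longrightarrow>
        (\<forall>x\<in>carrier (fst P U). snd P U' U'' (snd P U U' x) = snd P U U'' x))"

definition presheaf_mor :: "'k ring \<Rightarrow> 'x set set \<Rightarrow> ('k,'a,'x) presheaf \<Rightarrow> ('k,'b,'x) presheaf
    \<Rightarrow> ('x set \<Rightarrow> 'a \<Rightarrow> 'b) \<Rightarrow> bool" where
  "presheaf_mor Fld Os P Q phi \<longleftrightarrow>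
     (\<forall>U\<in>Os. linear_map Fld (fst P U) (fst Q U) (phi U)) \<and>
     (\<forall>U\<in>Os. \<forall>U'\<in>Os. U' \<subseteq> U \<longrightarrow>
        (\<forall>x\<in>carrier (fst P U). phi U' (snd P U U' x) = snd Q U U' (phi U x)))"

definition id_mor :: "'x set \<Rightarrow> 'a \<Rightarrow> 'a" where
  "id_mor = (\<lambda>U x. x)"

definition comp_mor :: "('x set \<Rightarrow> 'b \<Rightarrow> 'c) \<Rightarrow> ('x set \<Rightarrow> 'a \<Rightarrow> 'b) \<Rightarrow> ('x set \<Rightarrow> 'a \<Rightarrow> 'c)" where
  "comp_mor psi phi = (\<lambda>U x. psi U (phi U x))"

definition mor_eq :: "'x set set \<Rightarrow> ('k,'a,'x) presheaf \<Rightarrow> ('x set \<Rightarrow> 'a \<Rightarrow> 'b)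
    \<Rightarrow> ('x set \<Rightarrow> 'a \<Rightarrow> 'b) \<Rightarrow> bool" where
  "mor_eq Os P phi psi \<longleftrightarrow> (\<forall>U\<in>Os. \<forall>x\<in>carrier (fst P U). phi U x = psi U x)"

definition presheaf_iso :: "'k ring \<Rightarrow> 'x set set \<Rightarrow> ('k,'a,'x) presheaf \<Rightarrow> ('k,'b,'x) presheaf
    \<Rightarrow> ('x set \<Rightarrow> 'a \<Rightarrow> 'b) \<Rightarrow> bool" where
  "presheaf_iso Fld Os P Q phi \<longleftrightarrow> presheaf_mor Fld Os P Q phi \<and>
     (\<exists>psi. presheaf_mor Fld Os Q P psi \<and>
        mor_eq Os P (comp_mor psi phi) id_mor \<and> mor_eq Os Q (comp_mor phi psi) id_mor)"

definition opens :: "'x topology \<Rightarrow> 'x set set" where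
  "opens T = {W. openin T W}"

definition sheaf_on :: "'k ring \<Rightarrow> 'x topology \<Rightarrow> ('k,'a,'x) presheaf \<Rightarrow> bool" where
  "sheaf_on Fld T F \<longleftrightarrow> presheaf_on Fld (opens T) F \<and>
     (\<forall>W \<U>. openin T W \<and> (\<forall>U\<in>\<U>. openin T U) \<and> \<Union>\<U> = W \<longrightarrow>
        (\<forall>s\<in>carrier (fst F W). \<forall>t\<in>carrier (fst F W).
            (\<forall>U\<in>\<U>. snd F W U s = snd F W U t) \<longrightarrow> s = t) \<and>
        (\<forall>\<sigma>. (\<forall>U\<in>\<U>. \<sigma> U \<in> carrier (fst F U)) \<and>
              (\<forall>U\<in>\<U>. \<forall>U'\<in>\<U>. snd F U (U \<inter> U') (\<sigma> U) = snd F U' (U \<inter> U') (\<sigma> U')) \<longrightarrow>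
              (\<exists>s\<in>carrier (fst F W). \<forall>U\<in>\<U>. snd F W U s = \<sigma> U)))"

text \<open>Phi+: sections of the sheaf associated to a presheaf P on the base B over W
are the compatible families (the inverse limit over basic sets contained in W).\<close>
definition tilde_carrier :: "'x set set \<Rightarrow> ('k,'a,'x) presheaf \<Rightarrow> 'x set \<Rightarrow> ('x set \<Rightarrow> 'a) set" where
  "tilde_carrier B P W = {s.
     (\<forall>U\<in>B. U \<subseteq> W \<longrightarrow> s U \<in> carrier (fst P U)) \<and>
     (\<forall>U\<in>B. \<forall>U'\<in>B. U' \<subseteq> U \<and> U \<subseteq> W \<longrightarrow> snd P U U' (s U) = s U') \<and>
     (\<forall>U. \<not> (U \<in> B \<and> U \<subseteq> W) \<longrightarrow> s U = undefined)}"

definition tilde_module :: "'x set set \<Rightarrow> ('k,'a,'x) presheaf \<Rightarrow> 'x set \<Rightarrow> ('k, 'x set \<Rightarrow> 'a) module" where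
  "tilde_module B P W =
     \<lparr>carrier = tilde_carrier B P W, mult = undefined, one = undefined,
      zero = (\<lambda>U. if U \<in> B \<and> U \<subseteq> W then zero (fst P U) else undefined),
      add = (\<lambda>s t U. if U \<in> B \<and> U \<subseteq> W then add (fst P U) (s U) (t U) else undefined),
      smult = (\<lambda>a s U. if U \<in> B \<and> U \<subseteq> W then smult (fst P U) a (s U) else undefined)\<rparr>"

definition tilde_res :: "'x set set \<Rightarrow> 'x set \<Rightarrow> 'x set \<Rightarrow> ('x set \<Rightarrow> 'a) \<Rightarrow> ('x set \<Rightarrow> 'a)" where
  "tilde_res B W W' s = (\<lambda>U. if U \<in> B \<and> U \<subseteq> W' then s U else undefined)"

definition Phi_plus :: "'x set set \<Rightarrow> ('k,'a,'x) presheaf \<Rightarrow> ('k, 'x set \<Rightarrow> 'a, 'x) presheaf" where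
  "Phi_plus B P = (tilde_module B P, tilde_res B)"

definition Phi_plus_mor :: "'x set set \<Rightarrow> ('x set \<Rightarrow> 'a \<Rightarrow> 'b)
    \<Rightarrow> ('x set \<Rightarrow> ('x set \<Rightarrow> 'a) \<Rightarrow> ('x set \<Rightarrow> 'b))" where
  "Phi_plus_mor B phi = (\<lambda>W s U. if U \<in> B \<and> U \<subseteq> W then phi U (s U) else undefined)"

definition Phi_minus :: "'x set set \<Rightarrow> ('k,'a,'x) presheaf \<Rightarrow> ('k,'a,'x) presheaf" where
  "Phi_minus B F = ((\<lambda>U. if U \<in> B then fst F U else undefined),
                    (\<lambda>U U'. if U \<in> B \<and> U' \<in> B then snd F U U' else undefined))"

definition Phi_minus_mor :: "'x set set \<Rightarrow> ('x set \<Rightarrow> 'a \<Rightarrow> 'b) \<Rightarrow> ('x set \<Rightarrow> 'a \<Rightarrow> 'b)" where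
  "Phi_minus_mor B phi = (\<lambda>U. if U \<in> B then phi U else undefined)"

end

theory Submission
  imports Defs
begin

text \<open>Every point x of X lies in exactly one open simplex \<Delta>, and U(\<Delta>,\<delta>) is the smallest
open set containing x. Hence each basic open set is supercompact: every open cover of it has a
member containing it. For a base of supercompact sets the compatible families defining the
sections of Phi+ S over W satisfy the sheaf axioms for any cover of W, since every basic set
below W already lies below a member of the cover; so Phi+ lands in sheaves. Conversely an open
set is covered by the basic sets it contains, so a section of a sheaf is the same thing as the
compatible family of its restrictions to these basic sets. Restriction to the basic sets thus
gives both the unit and (inverted) the counit.\<close>

lemma linear_map_closed: "linear_map Fld V W f \<Longrightarrow> x \<in> carrier V \<Longrightarrow> f x \<in> carrier W"
  by (auto simp: linear_map_def)

lemma linear_map_add: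
  "linear_map Fld V W f \<Longrightarrow> x \<in> carrier V \<Longrightarrow> y \<in> carrier V \<Longrightarrow> f (add V x y) = add W (f x) (f y)"
  by (simp add: linear_map_def)

lemma linear_map_smult:
  "linear_map Fld V W f \<Longrightarrow> a \<in> carrier Fld \<Longrightarrow> x \<in> carrier V \<Longrightarrow> f (smult V a x) = smult W a (f x)"
  by (simp add: linear_map_def)

lemma linear_map_zero:
  assumes f: "linear_map Fld V W f" and "abelian_group V" "abelian_group W"
  shows "f (zero V) = zero W"
proof -
  interpret V: abelian_group V by fact
  interpret W: abelian_group W by fact
  have fz: "f (zero V) \<in> carrier W" using linear_map_closed[OF f] by simp
  have "add W (f (zero V)) (f (zero V)) = add W (zero W) (f (zero V))"
    using linear_map_add[OF f, of "zero V" "zero V"] fz by simp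
  then show ?thesis using fz by (metis W.add.right_cancel W.zero_closed)
qed

lemma linear_map_neg:
  assumes f: "linear_map Fld V W f" and "abelian_group V" "abelian_group W" and x: "x \<in> carrier V"
  shows "f (a_inv V x) = a_inv W (f x)"
proof -
  interpret V: abelian_group V by fact
  interpret W: abelian_group W by fact
  have "add W (f (a_inv V x)) (f x) = zero W"
    using linear_map_add[OF f, of "a_inv V x" x] linear_map_zero[OF assms(1-3)] x by (simp add: V.l_neg)
  then show ?thesis using linear_map_closed[OF f] x by (metis V.a_inv_closed W.minus_equality)
qed

lemma linear_map_inverse:
  assumes f: "linear_map Fld V W f" and V: "module Fld V"
    and g: "g \<in> carrier W \<rightarrow> carrier V"
    and gf: "\<And>x. x \<in> carrier V \<Longrightarrow> g (f x) = x" and fg: "\<And>y. y \<in> carrier W \<Longrightarrow> f (g y) = y"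
  shows "linear_map Fld W V g"
  unfolding linear_map_def
proof (intro conjI ballI)
  fix y1 y2 assume y: "y1 \<in> carrier W" "y2 \<in> carrier W"
  then have "add W y1 y2 = f (add V (g y1) (g y2))"
    using linear_map_add[OF f] g fg by (simp add: Pi_iff)
  then show "g (add W y1 y2) = add V (g y1) (g y2)"
    using gf g y module.axioms(2)[OF V]
    by (simp add: Pi_iff abelian_group.axioms(1) abelian_monoid.a_closed)
next
  fix a y assume a: "a \<in> carrier Fld" and y: "y \<in> carrier W"
  then have "smult W a y = f (smult V a (g y))"
    using linear_map_smult[OF f] g fg by (simp add: Pi_iff)
  then show "g (smult W a y) = smult V a (g y)"
    using gf g a y by (simp add: Pi_iff module.smult_closed[OF V])
qed (fact g)

lemma presheaf_on_module: "presheaf_on Fld Os P \<Longrightarrow> U \<in> Os \<Longrightarrow> module Fld (fst P U)"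
  by (simp add: presheaf_on_def)

lemma presheaf_on_abelian_group: "presheaf_on Fld Os P \<Longrightarrow> U \<in> Os \<Longrightarrow> abelian_group (fst P U)"
  using presheaf_on_module module.axioms(2) by blast

lemma presheaf_on_linear: "presheaf_on Fld Os P \<Longrightarrow> U \<in> Os \<Longrightarrow> U' \<in> Os \<Longrightarrow> U' \<subseteq> U \<Longrightarrow>
    linear_map Fld (fst P U) (fst P U') (snd P U U')"
  by (simp add: presheaf_on_def)

lemma presheaf_on_res_closed: "presheaf_on Fld Os P \<Longrightarrow> U \<in> Os \<Longrightarrow> U' \<in> Os \<Longrightarrow> U' \<subseteq> U \<Longrightarrow>
    x \<in> carrier (fst P U) \<Longrightarrow> snd P U U' x \<in> carrier (fst P U')"
  using presheaf_on_linear linear_map_closed by metis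

lemma presheaf_on_res_id: "presheaf_on Fld Os P \<Longrightarrow> U \<in> Os \<Longrightarrow> x \<in> carrier (fst P U) \<Longrightarrow> snd P U U x = x"
  by (simp add: presheaf_on_def)

lemma presheaf_on_res_trans: "presheaf_on Fld Os P \<Longrightarrow> U \<in> Os \<Longrightarrow> U' \<in> Os \<Longrightarrow> U'' \<in> Os \<Longrightarrow>
    U'' \<subseteq> U' \<Longrightarrow> U' \<subseteq> U \<Longrightarrow> x \<in> carrier (fst P U) \<Longrightarrow> snd P U' U'' (snd P U U' x) = snd P U U'' x"
  unfolding presheaf_on_def by blast

lemma presheaf_on_subset: "presheaf_on Fld Os P \<Longrightarrow> Os' \<subseteq> Os \<Longrightarrow> presheaf_on Fld Os' P"
  unfolding presheaf_on_def by (meson subsetD)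

lemma presheaf_mor_linear: "presheaf_mor Fld Os P Q phi \<Longrightarrow> U \<in> Os \<Longrightarrow>
    linear_map Fld (fst P U) (fst Q U) (phi U)"
  by (simp add: presheaf_mor_def)

lemma presheaf_mor_natural: "presheaf_mor Fld Os P Q phi \<Longrightarrow> U \<in> Os \<Longrightarrow> U' \<in> Os \<Longrightarrow> U' \<subseteq> U \<Longrightarrow>
    x \<in> carrier (fst P U) \<Longrightarrow> phi U' (snd P U U' x) = snd Q U U' (phi U x)"
  by (simp add: presheaf_mor_def)

lemma presheaf_iso_by_inverse:
  assumes P: "presheaf_on Fld Os P" and Q: "presheaf_on Fld Os Q"
    and psi: "presheaf_mor Fld Os Q P psi"
    and phi: "\<And>U. U \<in> Os \<Longrightarrow> phi U \<in> carrier (fst P U) \<rightarrow> carrier (fst Q U)"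
    and psi_phi: "mor_eq Os P (comp_mor psi phi) id_mor"
    and phi_psi: "mor_eq Os Q (comp_mor phi psi) id_mor"
  shows "presheaf_iso Fld Os P Q phi"
proof -
  have left: "psi U (phi U x) = x" if "U \<in> Os" "x \<in> carrier (fst P U)" for U x
    using psi_phi that by (simp add: mor_eq_def comp_mor_def id_mor_def)
  have right: "phi U (psi U y) = y" if "U \<in> Os" "y \<in> carrier (fst Q U)" for U y
    using phi_psi that by (simp add: mor_eq_def comp_mor_def id_mor_def)
  have "presheaf_mor Fld Os P Q phi"
    unfolding presheaf_mor_def
  proof (intro conjI ballI impI)
    fix U assume U: "U \<in> Os"
    show "linear_map Fld (fst P U) (fst Q U) (phi U)"
      by (rule linear_map_inverse[OF presheaf_mor_linear[OF psi U] presheaf_on_module[OF Q U] phi[OF U]])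
        (use U left right in auto)
  next
    fix U U' x assume U: "U \<in> Os" "U' \<in> Os" "U' \<subseteq> U" and x: "x \<in> carrier (fst P U)"
    define y where "y = phi U x"
    have y: "y \<in> carrier (fst Q U)" and x_eq: "x = psi U y"
      using phi[OF U(1)] x left[OF U(1) x] by (auto simp: y_def)
    have "phi U' (snd P U U' x) = phi U' (psi U' (snd Q U U' y))"
      using presheaf_mor_natural[OF psi U y] x_eq by simp
    also have "\<dots> = snd Q U U' y"
      using right presheaf_on_res_closed[OF Q U y] U by blast
    finally show "phi U' (snd P U U' x) = snd Q U U' (phi U x)" by (simp add: y_def)
  qed
  then show ?thesis
    unfolding presheaf_iso_def using psi psi_phi phi_psi by blast
qed

section \<open>Compatible families over a base\<close>

lemma tilde_carrier_iff: "s \<in> carrier (tilde_module B P W) \<longleftrightarrow>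
     (\<forall>U\<in>B. U \<subseteq> W \<longrightarrow> s U \<in> carrier (fst P U)) \<and>
     (\<forall>U\<in>B. \<forall>U'\<in>B. U' \<subseteq> U \<and> U \<subseteq> W \<longrightarrow> snd P U U' (s U) = s U') \<and>
     (\<forall>U. \<not> (U \<in> B \<and> U \<subseteq> W) \<longrightarrow> s U = undefined)"
  by (simp add: tilde_module_def tilde_carrier_def)

lemma tilde_carrier_mem:
  "s \<in> carrier (tilde_module B P W) \<Longrightarrow> U \<in> B \<Longrightarrow> U \<subseteq> W \<Longrightarrow> s U \<in> carrier (fst P U)"
  by (simp add: tilde_carrier_iff)

lemma tilde_carrier_res: "s \<in> carrier (tilde_module B P W) \<Longrightarrow> U \<in> B \<Longrightarrow> U' \<in> B \<Longrightarrow>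
    U' \<subseteq> U \<Longrightarrow> U \<subseteq> W \<Longrightarrow> snd P U U' (s U) = s U'"
  by (simp add: tilde_carrier_iff)

lemma tilde_carrier_undefined:
  "s \<in> carrier (tilde_module B P W) \<Longrightarrow> \<not> (U \<in> B \<and> U \<subseteq> W) \<Longrightarrow> s U = undefined"
  by (simp add: tilde_carrier_iff)

lemma tilde_module_zero:
  "zero (tilde_module B P W) = (\<lambda>U. if U \<in> B \<and> U \<subseteq> W then zero (fst P U) else undefined)"
  by (simp add: tilde_module_def)

lemma tilde_module_add: "add (tilde_module B P W) =
    (\<lambda>s t U. if U \<in> B \<and> U \<subseteq> W then add (fst P U) (s U) (t U) else undefined)"
  by (simp add: tilde_module_def)

lemma tilde_module_smult: "smult (tilde_module B P W) =
    (\<lambda>a s U. if U \<in> B \<and> U \<subseteq> W then smult (fst P U) a (s U) else undefined)"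
  by (simp add: tilde_module_def)

lemma tilde_module_abelian_group:
  assumes P: "presheaf_on Fld B P"
  shows "abelian_group (tilde_module B P W)"
proof -
  let ?M = "tilde_module B P W"
  have ag: "\<And>U. U \<in> B \<Longrightarrow> abelian_group (fst P U)" using presheaf_on_abelian_group[OF P] .
  have am: "\<And>U. U \<in> B \<Longrightarrow> abelian_monoid (fst P U)" using ag abelian_group.axioms(1) by blast
  note lin = presheaf_on_linear[OF P]
  show ?thesis
  proof (rule abelian_groupI)
    fix x y assume "x \<in> carrier ?M" "y \<in> carrier ?M"
    then show "add ?M x y \<in> carrier ?M" and "add ?M x y = add ?M y x"
      unfolding tilde_module_add tilde_carrier_iff
      by (auto simp: linear_map_add[OF lin] intro!: ext abelian_monoid.a_closed[OF am]
          abelian_monoid.a_comm[OF am])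
  next
    show "zero ?M \<in> carrier ?M"
      unfolding tilde_module_zero tilde_carrier_iff
      by (auto simp: linear_map_zero[OF lin ag ag] intro: abelian_monoid.zero_closed[OF am])
  next
    fix x y z assume "x \<in> carrier ?M" "y \<in> carrier ?M" "z \<in> carrier ?M"
    then show "add ?M (add ?M x y) z = add ?M x (add ?M y z)"
      unfolding tilde_module_add tilde_carrier_iff by (auto intro!: ext abelian_monoid.a_assoc[OF am])
  next
    fix x assume x: "x \<in> carrier ?M"
    then show "add ?M (zero ?M) x = x"
      unfolding tilde_module_add tilde_module_zero tilde_carrier_iff
      by (auto intro!: ext abelian_monoid.l_zero[OF am])
    let ?y = "\<lambda>U. if U \<in> B \<and> U \<subseteq> W then a_inv (fst P U) (x U) else undefined"
    have "?y \<in> carrier ?M"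
      using x unfolding tilde_carrier_iff
      by (auto simp: linear_map_neg[OF lin ag ag] intro: abelian_group.a_inv_closed[OF ag])
    moreover have "add ?M ?y x = zero ?M"
      using x unfolding tilde_module_add tilde_module_zero tilde_carrier_iff
      by (auto intro!: ext abelian_group.l_neg[OF ag])
    ultimately show "\<exists>y\<in>carrier ?M. add ?M y x = zero ?M" by blast
  qed
qed

lemma tilde_module_module:
  assumes Fld: "cring Fld" and P: "presheaf_on Fld B P"
  shows "module Fld (tilde_module B P W)"
proof (rule moduleI[OF Fld tilde_module_abelian_group[OF P]])
  note md = presheaf_on_module[OF P]
  fix a b x y
  assume a: "a \<in> carrier Fld" and b: "b \<in> carrier Fld"
    and x: "x \<in> carrier (tilde_module B P W)" and y: "y \<in> carrier (tilde_module B P W)"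
  show "smult (tilde_module B P W) a x \<in> carrier (tilde_module B P W)"
    using x a unfolding tilde_module_smult tilde_carrier_iff
    by (auto simp: linear_map_smult[OF presheaf_on_linear[OF P]] intro: module.smult_closed[OF md])
  show "smult (tilde_module B P W) (add Fld a b) x =
      add (tilde_module B P W) (smult (tilde_module B P W) a x) (smult (tilde_module B P W) b x)"
    using x a b unfolding tilde_module_smult tilde_module_add tilde_carrier_iff
    by (auto intro!: ext module.smult_l_distr[OF md])
  show "smult (tilde_module B P W) a (add (tilde_module B P W) x y) =
      add (tilde_module B P W) (smult (tilde_module B P W) a x) (smult (tilde_module B P W) a y)"
    using x y a unfolding tilde_module_smult tilde_module_add tilde_carrier_iff
    by (auto intro!: ext module.smult_r_distr[OF md])
  show "smult (tilde_module B P W) (mult Fld a b) x =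
      smult (tilde_module B P W) a (smult (tilde_module B P W) b x)"
    using x a b unfolding tilde_module_smult tilde_carrier_iff
    by (auto intro!: ext module.smult_assoc1[OF md])
next
  fix x assume "x \<in> carrier (tilde_module B P W)"
  then show "smult (tilde_module B P W) (one Fld) x = x"
    unfolding tilde_module_smult tilde_carrier_iff
    by (auto intro!: ext module.smult_one[OF presheaf_on_module[OF P]])
qed

lemma Phi_plus_fst: "fst (Phi_plus B P) = tilde_module B P"
  by (simp add: Phi_plus_def)

lemma Phi_plus_snd: "snd (Phi_plus B P) = tilde_res B"
  by (simp add: Phi_plus_def)

lemma tilde_res_closed:
  "s \<in> carrier (tilde_module B P W) \<Longrightarrow> W' \<subseteq> W \<Longrightarrow> tilde_res B W W' s \<in> carrier (tilde_module B P W')"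
  unfolding tilde_carrier_iff tilde_res_def by auto

lemma tilde_res_id: "s \<in> carrier (tilde_module B P W) \<Longrightarrow> tilde_res B W W s = s"
  unfolding tilde_carrier_iff tilde_res_def by auto

lemma Phi_plus_presheaf:
  assumes Fld: "cring Fld" and P: "presheaf_on Fld B P"
  shows "presheaf_on Fld Os (Phi_plus B P)"
  unfolding presheaf_on_def Phi_plus_fst Phi_plus_snd
proof (intro conjI ballI impI allI)
  fix U assume "U \<in> Os"
  show "module Fld (tilde_module B P U)"
    by (rule tilde_module_module[OF Fld P])
next
  fix U U' assume "U \<in> Os" "U' \<in> Os" and sub: "U' \<subseteq> U"
  then have sub': "\<And>V. V \<subseteq> U' \<Longrightarrow> V \<subseteq> U" by blast
  show "linear_map Fld (tilde_module B P U) (tilde_module B P U') (tilde_res B U U')"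
    unfolding linear_map_def
  proof (intro conjI ballI)
    show "tilde_res B U U' \<in> carrier (tilde_module B P U) \<rightarrow> carrier (tilde_module B P U')"
      using tilde_res_closed sub by blast
  qed (use sub' in \<open>auto simp: tilde_module_add tilde_module_smult tilde_res_def intro!: ext\<close>)
next
  fix U x assume "U \<in> Os" "x \<in> carrier (tilde_module B P U)"
  then show "tilde_res B U U x = x" by (simp add: tilde_res_id)
next
  fix U U' U'' x assume "U \<in> Os" "U' \<in> Os" "U'' \<in> Os" "U'' \<subseteq> U' \<and> U' \<subseteq> U"
  then have "\<And>V. V \<subseteq> U'' \<Longrightarrow> V \<subseteq> U' \<and> V \<subseteq> U" by blast
  then show "tilde_res B U' U'' (tilde_res B U U' x) = tilde_res B U U'' x"
    unfolding tilde_res_def by (auto intro!: ext)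
qed

lemma Phi_plus_mor_closed:
  assumes phi: "presheaf_mor Fld B P Q phi" and s: "s \<in> carrier (tilde_module B P W)"
  shows "Phi_plus_mor B phi W s \<in> carrier (tilde_module B Q W)"
  unfolding tilde_carrier_iff Phi_plus_mor_def
proof (intro conjI ballI allI impI)
  fix U U' assume U: "U \<in> B" "U' \<in> B" "U' \<subseteq> U \<and> U \<subseteq> W"
  then have "s U \<in> carrier (fst P U)" "snd P U U' (s U) = s U'"
    using s unfolding tilde_carrier_iff by auto
  then show "snd Q U U' (if U \<in> B \<and> U \<subseteq> W then phi U (s U) else undefined) =
      (if U' \<in> B \<and> U' \<subseteq> W then phi U' (s U') else undefined)"
    using U presheaf_mor_natural[OF phi, of U U' "s U"] by auto
qed (use s linear_map_closed[OF presheaf_mor_linear[OF phi]] in \<open>auto simp: tilde_carrier_iff\<close>)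

lemma Phi_plus_mor_mor:
  assumes phi: "presheaf_mor Fld B P Q phi"
  shows "presheaf_mor Fld Os (Phi_plus B P) (Phi_plus B Q) (Phi_plus_mor B phi)"
  unfolding presheaf_mor_def Phi_plus_fst Phi_plus_snd
proof (intro conjI ballI impI)
  fix W assume "W \<in> Os"
  note lin = presheaf_mor_linear[OF phi]
  show "linear_map Fld (tilde_module B P W) (tilde_module B Q W) (Phi_plus_mor B phi W)"
    unfolding linear_map_def
  proof (intro conjI ballI)
    show "Phi_plus_mor B phi W \<in> carrier (tilde_module B P W) \<rightarrow> carrier (tilde_module B Q W)"
      using Phi_plus_mor_closed[OF phi] by blast
  next
    fix x y assume "x \<in> carrier (tilde_module B P W)" "y \<in> carrier (tilde_module B P W)"
    then show "Phi_plus_mor B phi W (add (tilde_module B P W) x y) =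
        add (tilde_module B Q W) (Phi_plus_mor B phi W x) (Phi_plus_mor B phi W y)"
      unfolding tilde_module_add Phi_plus_mor_def tilde_carrier_iff
      by (auto intro!: ext linear_map_add[OF lin])
  next
    fix a x assume "a \<in> carrier Fld" "x \<in> carrier (tilde_module B P W)"
    then show "Phi_plus_mor B phi W (smult (tilde_module B P W) a x) =
        smult (tilde_module B Q W) a (Phi_plus_mor B phi W x)"
      unfolding tilde_module_smult Phi_plus_mor_def tilde_carrier_iff
      by (auto intro!: ext linear_map_smult[OF lin])
  qed
next
  fix W W' x assume "W \<in> Os" "W' \<in> Os" "W' \<subseteq> W"
  then have "\<And>V. V \<subseteq> W' \<Longrightarrow> V \<subseteq> W" by blast
  then show "Phi_plus_mor B phi W' (tilde_res B W W' x) = tilde_res B W W' (Phi_plus_mor B phi W x)"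
    unfolding Phi_plus_mor_def tilde_res_def by (auto intro!: ext)
qed

lemma Phi_plus_mor_id: "mor_eq Os (Phi_plus B P) (Phi_plus_mor B id_mor) id_mor"
  unfolding mor_eq_def Phi_plus_fst Phi_plus_mor_def id_mor_def
proof (intro ballI ext)
  fix W s V assume "s \<in> carrier (tilde_module B P W)"
  then show "(if V \<in> B \<and> V \<subseteq> W then s V else undefined) = s V"
    unfolding tilde_carrier_iff by auto
qed

lemma Phi_plus_mor_comp: "mor_eq Os (Phi_plus B P) (Phi_plus_mor B (comp_mor psi phi))
    (comp_mor (Phi_plus_mor B psi) (Phi_plus_mor B phi))"
  unfolding mor_eq_def Phi_plus_mor_def comp_mor_def by (auto intro!: ext)

lemma Phi_minus_presheaf:
  "presheaf_on Fld Os F \<Longrightarrow> B \<subseteq> Os \<Longrightarrow> presheaf_on Fld B (Phi_minus B F)"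
  unfolding presheaf_on_def Phi_minus_def by (auto simp: subset_iff)

lemma Phi_minus_mor_mor: "presheaf_mor Fld Os F G phi \<Longrightarrow> B \<subseteq> Os \<Longrightarrow>
    presheaf_mor Fld B (Phi_minus B F) (Phi_minus B G) (Phi_minus_mor B phi)"
  unfolding presheaf_mor_def Phi_minus_def Phi_minus_mor_def by (auto simp: subset_iff)

lemma Phi_minus_mor_id: "mor_eq B (Phi_minus B F) (Phi_minus_mor B id_mor) id_mor"
  unfolding mor_eq_def Phi_minus_mor_def by auto

lemma Phi_minus_mor_comp: "mor_eq B (Phi_minus B F) (Phi_minus_mor B (comp_mor psi phi))
    (comp_mor (Phi_minus_mor B psi) (Phi_minus_mor B phi))"
  unfolding mor_eq_def Phi_minus_mor_def comp_mor_def by auto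

lemma presheaf_iso_Phi_minus_iff:
  "presheaf_iso Fld B P (Phi_minus B Q) phi \<longleftrightarrow> presheaf_iso Fld B P Q phi"
  unfolding presheaf_iso_def presheaf_mor_def mor_eq_def Phi_minus_def by auto

lemma Phi_plus_Phi_minus: "Phi_plus B (Phi_minus B F) = Phi_plus B F"
  unfolding Phi_plus_def tilde_module_def tilde_carrier_def Phi_minus_def
  by (auto intro!: ext cong: if_cong)

lemma Phi_plus_mor_Phi_minus_mor: "Phi_plus_mor B (Phi_minus_mor B phi) = Phi_plus_mor B phi"
  unfolding Phi_plus_mor_def Phi_minus_mor_def by (auto intro!: ext)

definition base_restrictions ::
    "'x set set \<Rightarrow> ('k,'a,'x) presheaf \<Rightarrow> 'x set \<Rightarrow> 'a \<Rightarrow> ('x set \<Rightarrow> 'a)" where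
  "base_restrictions B P W t = (\<lambda>V. if V \<in> B \<and> V \<subseteq> W then snd P W V t else undefined)"

lemma base_restrictions_closed:
  assumes P: "presheaf_on Fld Os P" and B: "B \<subseteq> Os" and W: "W \<in> Os" and t: "t \<in> carrier (fst P W)"
  shows "base_restrictions B P W t \<in> carrier (tilde_module B P W)"
  unfolding tilde_carrier_iff base_restrictions_def
  using presheaf_on_res_closed[OF P W _ _ t] presheaf_on_res_trans[OF P W _ _ _ _ t] B
  by (auto simp: subset_iff)

lemma base_restrictions_mor:
  assumes P: "presheaf_on Fld Os P" and B: "B \<subseteq> Os"
  shows "presheaf_mor Fld Os P (Phi_plus B P) (base_restrictions B P)"
  unfolding presheaf_mor_def Phi_plus_fst Phi_plus_snd
proof (intro conjI ballI impI)
  fix W assume W: "W \<in> Os"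
  have lin: "linear_map Fld (fst P W) (fst P V) (snd P W V)" if "V \<in> B" "V \<subseteq> W" for V
    using presheaf_on_linear[OF P W] that B by blast
  show "linear_map Fld (fst P W) (tilde_module B P W) (base_restrictions B P W)"
    unfolding linear_map_def tilde_module_add tilde_module_smult
    using base_restrictions_closed[OF P B W]
    by (auto simp: base_restrictions_def linear_map_add[OF lin] linear_map_smult[OF lin] intro!: ext)
next
  fix W W' t assume W: "W \<in> Os" "W' \<in> Os" "W' \<subseteq> W" and t: "t \<in> carrier (fst P W)"
  show "base_restrictions B P W' (snd P W W' t) = tilde_res B W W' (base_restrictions B P W t)"
    unfolding base_restrictions_def tilde_res_def
    using presheaf_on_res_trans[OF P W(1,2) _ _ W(3) t] W(3) B by (auto simp: subset_iff intro!: ext)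
qed

lemma base_restrictions_natural:
  assumes phi: "presheaf_mor Fld Os P Q phi" and B: "B \<subseteq> Os" and W: "W \<in> Os"
    and t: "t \<in> carrier (fst P W)"
  shows "base_restrictions B Q W (phi W t) = Phi_plus_mor B phi W (base_restrictions B P W t)"
  unfolding base_restrictions_def Phi_plus_mor_def
  using presheaf_mor_natural[OF phi W _ _ t] B by (auto intro!: ext)

lemma Phi_plus_eval_mor:
  assumes P: "presheaf_on Fld B P"
  shows "presheaf_mor Fld B (Phi_plus B P) P (\<lambda>U s. s U)"
  unfolding presheaf_mor_def Phi_plus_fst Phi_plus_snd
proof (intro conjI ballI impI)
  fix U assume "U \<in> B"
  then show "linear_map Fld (tilde_module B P U) (fst P U) (\<lambda>s. s U)"
    unfolding linear_map_def tilde_module_add tilde_module_smult by (auto simp: tilde_carrier_iff)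
next
  fix U U' s assume "U \<in> B" "U' \<in> B" "U' \<subseteq> U" "s \<in> carrier (tilde_module B P U)"
  then show "tilde_res B U U' s U' = snd P U U' (s U)"
    unfolding tilde_res_def tilde_carrier_iff by auto
qed

lemma base_restrictions_iso:
  assumes Fld: "cring Fld" and P: "presheaf_on Fld B P"
  shows "presheaf_iso Fld B P (Phi_plus B P) (base_restrictions B P)"
proof (rule presheaf_iso_by_inverse[OF P Phi_plus_presheaf[OF Fld P] Phi_plus_eval_mor[OF P]])
  show "base_restrictions B P U \<in> carrier (fst P U) \<rightarrow> carrier (fst (Phi_plus B P) U)" if "U \<in> B" for U
    using base_restrictions_closed[OF P subset_refl that] by (simp add: Phi_plus_fst)
  show "mor_eq B P (comp_mor (\<lambda>U s. s U) (base_restrictions B P)) id_mor"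
    unfolding mor_eq_def comp_mor_def id_mor_def base_restrictions_def
    using presheaf_on_res_id[OF P] by auto
  show "mor_eq B (Phi_plus B P) (comp_mor (base_restrictions B P) (\<lambda>U s. s U)) id_mor"
    unfolding mor_eq_def comp_mor_def id_mor_def base_restrictions_def Phi_plus_fst
    by (auto simp: tilde_carrier_iff intro!: ext)
qed

lemma base_restrictions_natural_on_base:
  assumes phi: "presheaf_mor Fld B P Q phi"
  shows "mor_eq B P (comp_mor (base_restrictions B Q) phi)
    (comp_mor (Phi_minus_mor B (Phi_plus_mor B phi)) (base_restrictions B P))"
  unfolding mor_eq_def comp_mor_def Phi_minus_mor_def
  using base_restrictions_natural[OF phi subset_refl] by simp

section \<open>Supercompact bases\<close>

definition supercompact :: "'x topology \<Rightarrow> 'x set \<Rightarrow> bool" where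
  "supercompact T V \<longleftrightarrow> (\<forall>\<U>. (\<forall>U\<in>\<U>. openin T U) \<and> V \<subseteq> \<Union>\<U> \<longrightarrow> (\<exists>U\<in>\<U>. V \<subseteq> U))"

lemma supercompactD:
  "supercompact T V \<Longrightarrow> \<forall>U\<in>\<U>. openin T U \<Longrightarrow> V \<subseteq> \<Union>\<U> \<Longrightarrow> \<exists>U\<in>\<U>. V \<subseteq> U"
  unfolding supercompact_def by blast

lemma tilde_res_locality:
  assumes cov: "\<And>V. V \<in> B \<Longrightarrow> V \<subseteq> W \<Longrightarrow> \<exists>U\<in>\<U>. V \<subseteq> U"
    and s: "s \<in> carrier (tilde_module B P W)" and t: "t \<in> carrier (tilde_module B P W)"
    and eq: "\<And>U. U \<in> \<U> \<Longrightarrow> tilde_res B W U s = tilde_res B W U t"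
  shows "s = t"
proof
  fix V show "s V = t V"
  proof (cases "V \<in> B \<and> V \<subseteq> W")
    case True
    then obtain U where "U \<in> \<U>" "V \<subseteq> U" using cov by blast
    then have "tilde_res B W U s V = tilde_res B W U t V" using eq by simp
    then show ?thesis using True \<open>V \<subseteq> U\<close> unfolding tilde_res_def by simp
  next
    case False
    then show ?thesis using s t unfolding tilde_carrier_iff by auto
  qed
qed

lemma tilde_res_gluing:
  assumes cov: "\<And>V. V \<in> B \<Longrightarrow> V \<subseteq> W \<Longrightarrow> \<exists>U\<in>\<U>. V \<subseteq> U" and W: "\<Union>\<U> = W"
    and \<sigma>: "\<And>U. U \<in> \<U> \<Longrightarrow> \<sigma> U \<in> carrier (tilde_module B P U)"
    and compat: "\<And>U U'. U \<in> \<U> \<Longrightarrow> U' \<in> \<U> \<Longrightarrow>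
      tilde_res B U (U \<inter> U') (\<sigma> U) = tilde_res B U' (U \<inter> U') (\<sigma> U')"
  shows "\<exists>s\<in>carrier (tilde_module B P W). \<forall>U\<in>\<U>. tilde_res B W U s = \<sigma> U"
proof -
  have agree: "\<sigma> U V = \<sigma> U' V" if "U \<in> \<U>" "U' \<in> \<U>" "V \<in> B" "V \<subseteq> U" "V \<subseteq> U'" for U U' V
    using fun_cong[OF compat[OF that(1,2)], of V] that unfolding tilde_res_def by simp
  define s where "s V = (if V \<in> B \<and> V \<subseteq> W then \<sigma> (SOME U. U \<in> \<U> \<and> V \<subseteq> U) V else undefined)" for V
  have s_eq: "s V = \<sigma> U V" if U: "U \<in> \<U>" "V \<in> B" "V \<subseteq> U" for U V
  proof -
    have VW: "V \<subseteq> W" using U W by blast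
    have "\<exists>U. U \<in> \<U> \<and> V \<subseteq> U" using U by blast
    then have "(SOME U. U \<in> \<U> \<and> V \<subseteq> U) \<in> \<U> \<and> V \<subseteq> (SOME U. U \<in> \<U> \<and> V \<subseteq> U)"
      by (rule someI_ex)
    then have "\<sigma> (SOME U. U \<in> \<U> \<and> V \<subseteq> U) V = \<sigma> U V"
      using agree U by blast
    then show ?thesis using VW U(2) by (simp add: s_def)
  qed
  have s_carrier: "s \<in> carrier (tilde_module B P W)"
    unfolding tilde_carrier_iff
  proof (intro conjI ballI allI impI)
    fix V assume V: "V \<in> B" "V \<subseteq> W"
    then obtain U where U: "U \<in> \<U>" "V \<subseteq> U" using cov by blast
    show "s V \<in> carrier (fst P V)"
      using tilde_carrier_mem[OF \<sigma>[OF U(1)] V(1) U(2)] s_eq[OF U(1) V(1) U(2)] by simp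
  next
    fix V V' assume V: "V \<in> B" "V' \<in> B" "V' \<subseteq> V \<and> V \<subseteq> W"
    then obtain U where U: "U \<in> \<U>" "V \<subseteq> U" using cov by blast
    have "snd P V V' (\<sigma> U V) = \<sigma> U V'"
      using tilde_carrier_res[OF \<sigma>[OF U(1)] V(1,2)] V(3) U(2) by blast
    moreover have "s V = \<sigma> U V" "s V' = \<sigma> U V'" using s_eq[OF U(1)] V U(2) by auto
    ultimately show "snd P V V' (s V) = s V'" by simp
  next
    fix V assume "\<not> (V \<in> B \<and> V \<subseteq> W)"
    then show "s V = undefined" by (auto simp: s_def)
  qed
  have "tilde_res B W U s = \<sigma> U" if U: "U \<in> \<U>" for U
  proof
    fix V show "tilde_res B W U s V = \<sigma> U V"
      using s_eq[OF U, of V] tilde_carrier_undefined[OF \<sigma>[OF U], of V] by (auto simp: tilde_res_def)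
  qed
  with s_carrier show ?thesis by blast
qed

lemma Phi_plus_sheaf:
  assumes Fld: "cring Fld" and P: "presheaf_on Fld B P" and B: "\<forall>V\<in>B. supercompact T V"
  shows "sheaf_on Fld T (Phi_plus B P)"
  unfolding sheaf_on_def Phi_plus_fst Phi_plus_snd
proof (intro conjI allI impI ballI)
  show "presheaf_on Fld (opens T) (Phi_plus B P)" by (rule Phi_plus_presheaf[OF Fld P])
next
  fix W \<U> s t assume H: "openin T W \<and> (\<forall>U\<in>\<U>. openin T U) \<and> \<Union>\<U> = W"
    and s: "s \<in> carrier (tilde_module B P W)" and t: "t \<in> carrier (tilde_module B P W)"
    and eq: "\<forall>U\<in>\<U>. tilde_res B W U s = tilde_res B W U t"
  show "s = t"
  proof (rule tilde_res_locality[OF _ s t])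
    show "\<exists>U\<in>\<U>. V \<subseteq> U" if "V \<in> B" "V \<subseteq> W" for V
      by (rule supercompactD) (use B H that in auto)
  qed (use eq in auto)
next
  fix W \<U> \<sigma> assume H: "openin T W \<and> (\<forall>U\<in>\<U>. openin T U) \<and> \<Union>\<U> = W"
    and \<sigma>: "(\<forall>U\<in>\<U>. \<sigma> U \<in> carrier (tilde_module B P U)) \<and>
      (\<forall>U\<in>\<U>. \<forall>U'\<in>\<U>. tilde_res B U (U \<inter> U') (\<sigma> U) = tilde_res B U' (U \<inter> U') (\<sigma> U'))"
  show "\<exists>s\<in>carrier (tilde_module B P W). \<forall>U\<in>\<U>. tilde_res B W U s = \<sigma> U"
  proof (rule tilde_res_gluing)
    show "\<exists>U\<in>\<U>. V \<subseteq> U" if "V \<in> B" "V \<subseteq> W" for V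
      by (rule supercompactD) (use B H that in auto)
  qed (use H \<sigma> in auto)
qed
section \<open>Gluing sections of a sheaf over a base\<close>

lemma sheaf_on_presheaf: "sheaf_on Fld T F \<Longrightarrow> presheaf_on Fld (opens T) F"
  by (simp add: sheaf_on_def)

lemma sheaf_on_locality:
  assumes "sheaf_on Fld T F" "openin T W" "\<forall>U\<in>\<U>. openin T U" "\<Union>\<U> = W"
    and "s \<in> carrier (fst F W)" "t \<in> carrier (fst F W)" "\<forall>U\<in>\<U>. snd F W U s = snd F W U t"
  shows "s = t"
  using assms unfolding sheaf_on_def by metis

lemma sheaf_on_gluing:
  assumes "sheaf_on Fld T F" "openin T W" "\<forall>U\<in>\<U>. openin T U" "\<Union>\<U> = W"
    and "\<forall>U\<in>\<U>. \<sigma> U \<in> carrier (fst F U)"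
    and "\<forall>U\<in>\<U>. \<forall>U'\<in>\<U>. snd F U (U \<inter> U') (\<sigma> U) = snd F U' (U \<inter> U') (\<sigma> U')"
  shows "\<exists>s\<in>carrier (fst F W). \<forall>U\<in>\<U>. snd F W U s = \<sigma> U"
  using assms unfolding sheaf_on_def by metis

lemma openin_base_mem: "openin T = arbitrary union_of (\<lambda>V. V \<in> B) \<Longrightarrow> V \<in> B \<Longrightarrow> openin T V"
  by (metis openin_topology_base_unique)

lemma openin_base_subset_opens: "openin T = arbitrary union_of (\<lambda>V. V \<in> B) \<Longrightarrow> B \<subseteq> opens T"
  unfolding opens_def using openin_base_mem by blast

lemma openin_base_Union: "openin T = arbitrary union_of (\<lambda>V. V \<in> B) \<Longrightarrow> openin T W \<Longrightarrow>
    \<Union>{V \<in> B. V \<subseteq> W} = W"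
  unfolding openin_topology_base_unique by blast

lemma base_restrictions_inj:
  assumes F: "sheaf_on Fld T F" and B: "openin T = arbitrary union_of (\<lambda>V. V \<in> B)"
    and W: "openin T W" and t: "t \<in> carrier (fst F W)" "t' \<in> carrier (fst F W)"
    and eq: "base_restrictions B F W t = base_restrictions B F W t'"
  shows "t = t'"
proof (rule sheaf_on_locality[OF F W _ openin_base_Union[OF B W] t])
  show "\<forall>U\<in>{V \<in> B. V \<subseteq> W}. openin T U" using openin_base_mem[OF B] by blast
  show "\<forall>U\<in>{V \<in> B. V \<subseteq> W}. snd F W U t = snd F W U t'"
    using eq unfolding base_restrictions_def by (metis (mono_tags, lifting) mem_Collect_eq)
qed

lemma base_restrictions_res:
  assumes F: "presheaf_on Fld (opens T) F" and B: "B \<subseteq> opens T"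
    and s: "s \<in> carrier (tilde_module B F W)" and V: "V \<in> B" "V \<subseteq> W"
    and U: "openin T U" "U \<subseteq> V"
  shows "base_restrictions B F U (snd F V U (s V)) = tilde_res B W U s"
proof
  fix V' show "base_restrictions B F U (snd F V U (s V)) V' = tilde_res B W U s V'"
  proof (cases "V' \<in> B \<and> V' \<subseteq> U")
    case True
    have "snd F U V' (snd F V U (s V)) = snd F V V' (s V)"
      using presheaf_on_res_trans[OF F _ _ _ _ U(2) tilde_carrier_mem[OF s V]] V U True B
      by (auto simp: opens_def)
    also have "\<dots> = s V'" using tilde_carrier_res[OF s V(1)] True U(2) V(2) by blast
    finally show ?thesis using True U V unfolding base_restrictions_def tilde_res_def by auto
  qed (auto simp: base_restrictions_def tilde_res_def)
qed

lemma base_restrictions_surj: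
  assumes F: "sheaf_on Fld T F" and B: "openin T = arbitrary union_of (\<lambda>V. V \<in> B)"
    and W: "openin T W" and s: "s \<in> carrier (tilde_module B F W)"
  shows "\<exists>t\<in>carrier (fst F W). base_restrictions B F W t = s"
proof -
  note PF = sheaf_on_presheaf[OF F] and BO = openin_base_subset_opens[OF B]
  let ?\<U> = "{V \<in> B. V \<subseteq> W}"
  have "\<exists>t\<in>carrier (fst F W). \<forall>V\<in>?\<U>. snd F W V t = s V"
  proof (rule sheaf_on_gluing[OF F W _ openin_base_Union[OF B W]])
    show "\<forall>U\<in>?\<U>. openin T U" using openin_base_mem[OF B] by blast
    show "\<forall>V\<in>?\<U>. s V \<in> carrier (fst F V)" using tilde_carrier_mem[OF s] by blast
    show "\<forall>V\<in>?\<U>. \<forall>V'\<in>?\<U>. snd F V (V \<inter> V') (s V) = snd F V' (V \<inter> V') (s V')"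
    proof (intro ballI)
      fix V V' assume V: "V \<in> ?\<U>" and V': "V' \<in> ?\<U>"
      then have opn: "openin T V" "openin T V'" "openin T (V \<inter> V')"
        using openin_base_mem[OF B] by auto
      show "snd F V (V \<inter> V') (s V) = snd F V' (V \<inter> V') (s V')"
      proof (rule base_restrictions_inj[OF F B opn(3)])
        show "snd F V (V \<inter> V') (s V) \<in> carrier (fst F (V \<inter> V'))"
          "snd F V' (V \<inter> V') (s V') \<in> carrier (fst F (V \<inter> V'))"
          using presheaf_on_res_closed[OF PF] tilde_carrier_mem[OF s] opn V V'
          by (auto simp: opens_def)
        show "base_restrictions B F (V \<inter> V') (snd F V (V \<inter> V') (s V)) =
            base_restrictions B F (V \<inter> V') (snd F V' (V \<inter> V') (s V'))"
          using base_restrictions_res[OF PF BO s] opn V V' by simp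
      qed
    qed
  qed
  then obtain t where t: "t \<in> carrier (fst F W)" and res: "\<And>V. V \<in> ?\<U> \<Longrightarrow> snd F W V t = s V"
    by blast
  have "base_restrictions B F W t = s"
  proof
    fix V show "base_restrictions B F W t V = s V"
      using res[of V] tilde_carrier_undefined[OF s, of V] by (auto simp: base_restrictions_def)
  qed
  with t show ?thesis by blast
qed

text \<open>The choice is meaningful only for a compatible family s over an open set W, where it
picks the unique gluing.\<close>
definition glue_base_sections ::
    "'x set set \<Rightarrow> ('k,'b,'x) presheaf \<Rightarrow> 'x set \<Rightarrow> ('x set \<Rightarrow> 'b) \<Rightarrow> 'b" where
  "glue_base_sections B F W s = (SOME t. t \<in> carrier (fst F W) \<and> base_restrictions B F W t = s)"

lemma glue_base_sections_spec:
  assumes "sheaf_on Fld T F" "openin T = arbitrary union_of (\<lambda>V. V \<in> B)"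
    and "openin T W" "s \<in> carrier (tilde_module B F W)"
  shows "glue_base_sections B F W s \<in> carrier (fst F W)"
    and "base_restrictions B F W (glue_base_sections B F W s) = s"
  using someI_ex[OF base_restrictions_surj[OF assms, unfolded Bex_def]]
  unfolding glue_base_sections_def by blast+

lemma glue_base_restrictions:
  assumes F: "sheaf_on Fld T F" and B: "openin T = arbitrary union_of (\<lambda>V. V \<in> B)"
    and W: "openin T W" and t: "t \<in> carrier (fst F W)"
  shows "glue_base_sections B F W (base_restrictions B F W t) = t"
proof -
  have "base_restrictions B F W t \<in> carrier (tilde_module B F W)"
    using base_restrictions_closed[OF sheaf_on_presheaf[OF F] openin_base_subset_opens[OF B] _ t] W
    by (simp add: opens_def)
  from glue_base_sections_spec[OF F B W this] show ?thesis
    using base_restrictions_inj[OF F B W _ t] by blast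
qed

lemma glue_base_sections_iso:
  assumes Fld: "cring Fld" and F: "sheaf_on Fld T F" and B: "openin T = arbitrary union_of (\<lambda>V. V \<in> B)"
  shows "presheaf_iso Fld (opens T) (Phi_plus B F) F (glue_base_sections B F)"
proof -
  note PF = sheaf_on_presheaf[OF F] and BO = openin_base_subset_opens[OF B]
  show ?thesis
  proof (rule presheaf_iso_by_inverse[OF Phi_plus_presheaf[OF Fld presheaf_on_subset[OF PF BO]] PF
        base_restrictions_mor[OF PF BO]])
    show "glue_base_sections B F W \<in> carrier (fst (Phi_plus B F) W) \<rightarrow> carrier (fst F W)"
      if "W \<in> opens T" for W
      using glue_base_sections_spec(1)[OF F B] that by (auto simp: Phi_plus_fst opens_def)
    show "mor_eq (opens T) (Phi_plus B F) (comp_mor (base_restrictions B F) (glue_base_sections B F)) id_mor"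
      using glue_base_sections_spec(2)[OF F B]
      by (auto simp: mor_eq_def comp_mor_def id_mor_def Phi_plus_fst opens_def)
    show "mor_eq (opens T) F (comp_mor (glue_base_sections B F) (base_restrictions B F)) id_mor"
      using glue_base_restrictions[OF F B] by (auto simp: mor_eq_def comp_mor_def id_mor_def opens_def)
  qed
qed

lemma glue_base_sections_natural:
  assumes F: "sheaf_on Fld T F" and G: "sheaf_on Fld T G" and B: "openin T = arbitrary union_of (\<lambda>V. V \<in> B)"
    and phi: "presheaf_mor Fld (opens T) F G phi"
  shows "mor_eq (opens T) (Phi_plus B F) (comp_mor phi (glue_base_sections B F))
    (comp_mor (glue_base_sections B G) (Phi_plus_mor B phi))"
  unfolding mor_eq_def comp_mor_def Phi_plus_fst
proof (intro ballI)
  fix W s assume "W \<in> opens T" and s: "s \<in> carrier (tilde_module B F W)"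
  then have W: "openin T W" by (simp add: opens_def)
  define t where "t = glue_base_sections B F W s"
  have t: "t \<in> carrier (fst F W)" and s_eq: "s = base_restrictions B F W t"
    using glue_base_sections_spec[OF F B W s] by (simp_all add: t_def)
  have "Phi_plus_mor B phi W s = base_restrictions B G W (phi W t)"
    using base_restrictions_natural[OF phi openin_base_subset_opens[OF B] _ t] W s_eq
    by (simp add: opens_def)
  moreover have "phi W t \<in> carrier (fst G W)"
    using linear_map_closed[OF presheaf_mor_linear[OF phi] t] W by (simp add: opens_def)
  ultimately show "phi W (glue_base_sections B F W s) = glue_base_sections B G W (Phi_plus_mor B phi W s)"
    using glue_base_restrictions[OF G B W] by (simp add: t_def)
qed

section \<open>Perverse stars\<close>

lemma open_simplex_support: "f \<in> open_simplex S \<Longrightarrow> S = {v. f v \<noteq> 0}"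
  unfolding open_simplex_def by (auto dest: less_imp_neq[THEN not_sym])

lemma open_simplex_unique: "f \<in> open_simplex S \<Longrightarrow> f \<in> open_simplex S' \<Longrightarrow> S = S'"
  using open_simplex_support by blast

lemma open_simplex_nonempty:
  assumes "finite S" "S \<noteq> {}"
  shows "open_simplex S \<noteq> {}"
proof -
  have "(\<lambda>v. if v \<in> S then 1 / real (card S) else 0) \<in> open_simplex S"
    using assms by (simp add: open_simplex_def card_gt_0_iff)
  then show ?thesis by blast
qed

lemma mem_perv_star:
  "x \<in> perv_star C d S \<longleftrightarrow> (\<exists>S'. S' \<in> C \<and> perv_ge C d S S' \<and> x \<in> open_simplex S')"
  unfolding perv_star_def by blast

lemma open_simplex_subset_perv_star: "S \<in> C \<Longrightarrow> open_simplex S \<subseteq> perv_star C d S"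
  unfolding subset_iff mem_perv_star perv_ge_def by blast

lemma perv_star_least:
  assumes "S' \<in> C" "x \<in> open_simplex S'" "x \<in> perv_star C d S"
  shows "perv_star C d S' \<subseteq> perv_star C d S"
proof
  obtain S2 where "perv_ge C d S S2" "x \<in> open_simplex S2"
    using assms(3) unfolding mem_perv_star by blast
  then have SS': "perv_ge C d S S'" using open_simplex_unique assms(2) by blast
  fix y assume "y \<in> perv_star C d S'"
  then obtain S3 where S3: "S3 \<in> C" "perv_ge C d S' S3" "y \<in> open_simplex S3"
    unfolding mem_perv_star by blast
  have "perv_ge C d S S3"
    using SS' S3(2) unfolding perv_ge_def by (rule rtranclp_trans)
  with S3 show "y \<in> perv_star C d S" unfolding mem_perv_star by blast
qed

lemma perv_base_Int:
  assumes "V \<in> perv_base C d" "V' \<in> perv_base C d"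
  shows "(arbitrary union_of (\<lambda>U. U \<in> perv_base C d)) (V \<inter> V')"
  unfolding arbitrary_union_of_alt
proof
  obtain S0 S1 where V: "V = perv_star C d S0" "V' = perv_star C d S1"
    using assms unfolding perv_base_def by blast
  fix x assume x: "x \<in> V \<inter> V'"
  then have "x \<in> perv_star C d S0" unfolding V by blast
  then obtain S where S: "S \<in> C" "x \<in> open_simplex S"
    unfolding mem_perv_star by blast
  have "perv_star C d S \<subseteq> V \<inter> V'"
    using perv_star_least[OF S] x unfolding V by blast
  moreover have "x \<in> perv_star C d S" using S open_simplex_subset_perv_star by blast
  moreover have "perv_star C d S \<in> perv_base C d" using S(1) unfolding perv_base_def by blast
  ultimately show "\<exists>U. U \<in> perv_base C d \<and> x \<in> U \<and> U \<subseteq> V \<inter> V'" by blast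
qed

lemma openin_perv_topology:
  "openin (perv_topology C d) = arbitrary union_of (\<lambda>V. V \<in> perv_base C d)"
proof -
  have "(\<lambda>W. \<exists>F \<subseteq> perv_base C d. W = \<Union>F) = arbitrary union_of (\<lambda>V. V \<in> perv_base C d)"
    by (auto simp: union_of_def arbitrary_def fun_eq_iff)
  moreover have "istopology (arbitrary union_of (\<lambda>V. V \<in> perv_base C d))"
    unfolding istopology_base_eq using perv_base_Int by blast
  ultimately show ?thesis
    unfolding perv_topology_def by simp
qed

lemma perv_star_supercompact:
  assumes C: "simplicial_complex C" and S: "S \<in> C"
  shows "supercompact (perv_topology C d) (perv_star C d S)"
  unfolding supercompact_def
proof (intro allI impI)
  fix \<U> assume H: "(\<forall>U\<in>\<U>. openin (perv_topology C d) U) \<and> perv_star C d S \<subseteq> \<Union>\<U>"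
  have "finite S" "S \<noteq> {}" using C S unfolding simplicial_complex_def by auto
  then obtain x where x: "x \<in> open_simplex S" using open_simplex_nonempty by blast
  then have "x \<in> \<Union>\<U>" using H open_simplex_subset_perv_star[OF S] by blast
  then obtain U where U: "U \<in> \<U>" "x \<in> U" by blast
  then have "(arbitrary union_of (\<lambda>V. V \<in> perv_base C d)) U"
    using H openin_perv_topology by metis
  then obtain V where V: "V \<in> perv_base C d" "x \<in> V" "V \<subseteq> U"
    using U(2) unfolding arbitrary_union_of_alt by blast
  then obtain S0 where "V = perv_star C d S0" unfolding perv_base_def by blast
  then have "perv_star C d S \<subseteq> V" using perv_star_least[OF S x] V(2) by blast
  with U V show "\<exists>U\<in>\<U>. perv_star C d S \<subseteq> U" by blast
qed

theorem lemma2p3p5: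
  fixes C :: "'v set set" and d :: "nat \<Rightarrow> int" and Fld :: "'k ring"
  assumes "simplicial_complex C" and "connected (realization C)"
    and "cellular_perversity d" and "field Fld"
  defines "B \<equiv> perv_base C d" and "T \<equiv> perv_topology C d"
  shows
  \<comment> \<open>Phi+ is a functor Pre B(X,d) to SH(T(X,d))\<close>
  "(\<forall>P :: ('k,'a,'v \<Rightarrow> real) presheaf. presheaf_on Fld B P \<longrightarrow> sheaf_on Fld T (Phi_plus B P)) \<and>
   (\<forall>(P :: ('k,'a,'v \<Rightarrow> real) presheaf) Q phi. presheaf_on Fld B P \<and> presheaf_on Fld B Q \<and>
       presheaf_mor Fld B P Q phi \<longrightarrow>
       presheaf_mor Fld (opens T) (Phi_plus B P) (Phi_plus B Q) (Phi_plus_mor B phi)) \<and>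
   (\<forall>P :: ('k,'a,'v \<Rightarrow> real) presheaf. presheaf_on Fld B P \<longrightarrow>
       mor_eq (opens T) (Phi_plus B P) (Phi_plus_mor B id_mor) id_mor) \<and>
   (\<forall>(P :: ('k,'a,'v \<Rightarrow> real) presheaf) Q R phi psi.
       presheaf_on Fld B P \<and> presheaf_on Fld B Q \<and> presheaf_on Fld B R \<and>
       presheaf_mor Fld B P Q phi \<and> presheaf_mor Fld B Q R psi \<longrightarrow>
       mor_eq (opens T) (Phi_plus B P) (Phi_plus_mor B (comp_mor psi phi))
         (comp_mor (Phi_plus_mor B psi) (Phi_plus_mor B phi))) \<and>
  \<comment> \<open>Phi- is a functor SH(T(X,d)) to Pre B(X,d)\<close>
   (\<forall>F :: ('k,'b,'v \<Rightarrow> real) presheaf. sheaf_on Fld T F \<longrightarrow> presheaf_on Fld B (Phi_minus B F)) \<and>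
   (\<forall>(F :: ('k,'b,'v \<Rightarrow> real) presheaf) G phi. sheaf_on Fld T F \<and> sheaf_on Fld T G \<and>
       presheaf_mor Fld (opens T) F G phi \<longrightarrow>
       presheaf_mor Fld B (Phi_minus B F) (Phi_minus B G) (Phi_minus_mor B phi)) \<and>
   (\<forall>F :: ('k,'b,'v \<Rightarrow> real) presheaf. sheaf_on Fld T F \<longrightarrow>
       mor_eq B (Phi_minus B F) (Phi_minus_mor B id_mor) id_mor) \<and>
   (\<forall>(F :: ('k,'b,'v \<Rightarrow> real) presheaf) G H phi psi.
       sheaf_on Fld T F \<and> sheaf_on Fld T G \<and> sheaf_on Fld T H \<and>
       presheaf_mor Fld (opens T) F G phi \<and> presheaf_mor Fld (opens T) G H psi \<longrightarrow>
       mor_eq B (Phi_minus B F) (Phi_minus_mor B (comp_mor psi phi))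
         (comp_mor (Phi_minus_mor B psi) (Phi_minus_mor B phi))) \<and>
  \<comment> \<open>natural isomorphism Id = Phi- Phi+ on Pre B(X,d)\<close>
   (\<exists>eta. (\<forall>P :: ('k,'a,'v \<Rightarrow> real) presheaf. presheaf_on Fld B P \<longrightarrow>
             presheaf_iso Fld B P (Phi_minus B (Phi_plus B P)) (eta P)) \<and>
          (\<forall>(P :: ('k,'a,'v \<Rightarrow> real) presheaf) Q phi.
             presheaf_on Fld B P \<and> presheaf_on Fld B Q \<and> presheaf_mor Fld B P Q phi \<longrightarrow>
             mor_eq B P (comp_mor (eta Q) phi)
               (comp_mor (Phi_minus_mor B (Phi_plus_mor B phi)) (eta P)))) \<and>
  \<comment> \<open>natural isomorphism Phi+ Phi- = Id on SH(T(X,d))\<close>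
   (\<exists>eps. (\<forall>F :: ('k,'b,'v \<Rightarrow> real) presheaf. sheaf_on Fld T F \<longrightarrow>
             presheaf_iso Fld (opens T) (Phi_plus B (Phi_minus B F)) F (eps F)) \<and>
          (\<forall>(F :: ('k,'b,'v \<Rightarrow> real) presheaf) G phi.
             sheaf_on Fld T F \<and> sheaf_on Fld T G \<and> presheaf_mor Fld (opens T) F G phi \<longrightarrow>
             mor_eq (opens T) (Phi_plus B (Phi_minus B F)) (comp_mor phi (eps F))
               (comp_mor (eps G) (Phi_plus_mor B (Phi_minus_mor B phi)))))"
proof -
  have Fld: "cring Fld" using \<open>field Fld\<close> field.axioms(1) domain.axioms(1) by blast
  have base: "openin T = arbitrary union_of (\<lambda>V. V \<in> B)"
    unfolding B_def T_def by (rule openin_perv_topology)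
  have supercompact: "\<forall>V\<in>B. supercompact T V"
    using perv_star_supercompact[OF \<open>simplicial_complex C\<close>] unfolding B_def T_def perv_base_def by blast
  have BO: "B \<subseteq> opens T" using openin_base_subset_opens[OF base] .
  show ?thesis
    unfolding Phi_plus_Phi_minus Phi_plus_mor_Phi_minus_mor presheaf_iso_Phi_minus_iff
  proof (intro conjI allI impI exI[of _ "base_restrictions B"] exI[of _ "glue_base_sections B"])
    show "sheaf_on Fld T (Phi_plus B P)" if "presheaf_on Fld B P" for P :: "('k,'a,'v \<Rightarrow> real) presheaf"
      using Phi_plus_sheaf[OF Fld that supercompact] .
    show "presheaf_on Fld B (Phi_minus B F)" if "sheaf_on Fld T F" for F :: "('k,'b,'v \<Rightarrow> real) presheaf"
      using Phi_minus_presheaf[OF sheaf_on_presheaf[OF that] BO] .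
    show "presheaf_iso Fld B P (Phi_plus B P) (base_restrictions B P)"
      if "presheaf_on Fld B P" for P :: "('k,'a,'v \<Rightarrow> real) presheaf"
      using base_restrictions_iso[OF Fld that] .
    show "presheaf_iso Fld (opens T) (Phi_plus B F) F (glue_base_sections B F)"
      if "sheaf_on Fld T F" for F :: "('k,'b,'v \<Rightarrow> real) presheaf"
      using glue_base_sections_iso[OF Fld that base] .
  qed (auto intro: Phi_plus_mor_mor Phi_plus_mor_id Phi_plus_mor_comp Phi_minus_mor_mor[OF _ BO]
      Phi_minus_mor_id Phi_minus_mor_comp base_restrictions_natural_on_base
      glue_base_sections_natural[OF _ _ base])
qed

end
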